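(* Suppose the marginal $\mu_x$ on $\mathbb{R}$ is supported on $[0,1]$ and has a continuous density (also denoted $\mu_x$), $p_y$ is continuous, and either $\mu_x(p_y^{-1}((0,1/2)))>0$ or $\mu_x(p_y^{-1}((1/2,1)))>0$. Then there exists a constant $c\in(0,1/4)$, depending only on $\mu_x$ and $p_y$, such that for every $\delta\in(0,1)$ and $n\ge\ln(1/\delta)/c$, with probability at least $1-7\delta$ over the i.i.d. draw of $((x_i,y_i))_{i=1}^n$, there exist an interval $I\subseteq[0,1]$ and a set of index pairs $S\subseteq[n]^2$ such that: (1) either $p_y\in[c,1/2-c]$ everywhere on $I$, or $p_y\in[1/2+c,1-c]$ everywhere on $I$; let $\hat y:=\mathrm{sgn}(p_y-1/2)$ on $I$; (2) if $(i,k)\in S$ then $x_i<x_k=\min\{x_s:x_s>x_i\}$ and $y_i=y_k=-\hat y$; (3) every local interpolation rule $f\in\mathcal F_n$ satisfies $\mathcal R_z(f)\ge\overline{\mathcal R}_z+c$.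
   Context: Data: pairs $(x,y)\in\mathbb{R}\times\{\pm1\}$ with $x\sim\mu_x$ and $\Pr[y=1\mid x]=p_y(x)$; sample $((x_i,y_i))_{i=1}^n$ i.i.d. $\mathcal R_z(f)=\Pr[\mathrm{sgn}(f(x))\ne y]$ with $\mathrm{sgn}(r)=2\mathbf 1[r\ge0]-1$, and $\overline{\mathcal R}_z$ is the infimum of $\mathcal R_z$ over measurable $f$. Local interpolation rules: index the sample in sorted order $x_{(1)}\le\dots\le x_{(n)}$; $\mathcal F_n$ is the set of $f:\mathbb{R}\to\mathbb{R}$ such that $f(x_{(i)})=y_{(i)}$ for all $i$, and whenever $y_{(i)}=y_{(i+1)}$, $\inf_{\alpha\in[0,1]}f(\alpha x_{(i)}+(1-\alpha)x_{(i+1)})\,y_{(i)}>0$. *)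

theory Defs
  imports "HOL-Probability.Probability"
begin

definition sgnr :: "real \<Rightarrow> real" where
  "sgnr r = (if r \<ge> 0 then 1 else -1)"

definition mu_x :: "(real \<Rightarrow> real) \<Rightarrow> real measure" where
  "mu_x d = density lborel (\<lambda>x. ennreal (d x))"

text \<open>Joint law of (x,y) on R x {-1,1}: x ~ mu_x, Pr[y = 1 | x] = p x.\<close>
definition joint :: "(real \<Rightarrow> real) \<Rightarrow> (real \<Rightarrow> real) \<Rightarrow> (real \<times> real) measure" where
  "joint d p = density (lborel \<Otimes>\<^sub>M count_space {-1, 1::real})
      (\<lambda>(x, y). ennreal (d x * (if y = 1 then p x else 1 - p x)))"

definition risk :: "(real \<Rightarrow> real) \<Rightarrow> (real \<Rightarrow> real) \<Rightarrow> (real \<Rightarrow> real) \<Rightarrow> real" where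
  "risk d p f = measure (joint d p) {z \<in> space (joint d p). sgnr (f (fst z)) \<noteq> snd z}"

definition bayes_risk :: "(real \<Rightarrow> real) \<Rightarrow> (real \<Rightarrow> real) \<Rightarrow> real" where
  "bayes_risk d p = (INF f \<in> borel_measurable borel. risk d p f)"

definition sample_law :: "(real \<Rightarrow> real) \<Rightarrow> (real \<Rightarrow> real) \<Rightarrow> nat \<Rightarrow> (nat \<Rightarrow> real \<times> real) measure" where
  "sample_law d p n = PiM {..<n} (\<lambda>_. joint d p)"

text \<open>Consecutive points in sorted order are pairs x_i < x_j with no sample point strictly
  between them; inf_{t in [x_i,x_j]} f(t) y_i > 0 is written out as a positive lower bound.\<close>
definition local_interp :: "(nat \<Rightarrow> real \<times> real) \<Rightarrow> nat \<Rightarrow> (real \<Rightarrow> real) set" where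
  "local_interp s n = {f. (\<forall>i<n. f (fst (s i)) = snd (s i)) \<and>
     (\<forall>i<n. \<forall>j<n. fst (s i) < fst (s j) \<and>
        \<not> (\<exists>k<n. fst (s i) < fst (s k) \<and> fst (s k) < fst (s j)) \<and>
        snd (s i) = snd (s j) \<longrightarrow>
        (\<exists>\<epsilon>>0. \<forall>t\<in>{fst (s i)..fst (s j)}. f t * snd (s i) \<ge> \<epsilon>))}"

end

theory Submission
  imports Defs
begin

text \<open>Near a point where the density is positive and \<open>p\<close> lies strictly between \<open>0\<close>
  and \<open>1/2\<close> (or between \<open>1/2\<close> and \<open>1\<close>) there is an interval \<open>[u, u + L]\<close> on which the label
  \<open>\<sigma>\<close> that the Bayes classifier does not predict has conditional probability in
  \<open>[\<alpha>, 1/2 - \<alpha>]\<close> and the density lies in \<open>[\<beta>, D]\<close>. Cut the interval into \<open>n\<close> blocks of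
  three thirds each and call a block good if both outer thirds contain sample points, all
  labelled \<open>\<sigma>\<close>, while the middle third contains none. The two sample points flanking the middle
  third of a good block are then neighbours with label \<open>\<sigma>\<close>, so every local interpolation rule
  predicts \<open>\<sigma>\<close> on that middle third and pays at least \<open>2 \<alpha> \<beta>\<close> per unit length compared
  with the Bayes classifier. Each block is good with probability at least
  \<open>\<rho> = (\<alpha> \<beta> L)\<^sup>2 / 36\<close>, and moving one sample changes the number of good blocks by at
  most 2, so by McDiarmid's inequality more than \<open>n \<rho> / 2\<close> blocks are good except with
  probability \<open>exp (- n \<rho>\<^sup>2 / 32)\<close>; this yields an excess risk of at least \<open>\<alpha> \<beta> \<rho> L / 3\<close>.\<close>

section \<open>McDiarmid's inequality\<close>

definition bounded_differences :: "'a measure \<Rightarrow> nat \<Rightarrow> real \<Rightarrow> ((nat \<Rightarrow> 'a) \<Rightarrow> real) \<Rightarrow> bool" where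
  "bounded_differences M n c F \<longleftrightarrow>
     (\<forall>w\<in>space (PiM {..<n} (\<lambda>_. M)). \<forall>i<n. \<forall>x\<in>space M. \<forall>x'\<in>space M.
        \<bar>F (w(i:=x)) - F (w(i:=x'))\<bar> \<le> c)"

context prob_space
begin

lemma fun_upd_last_in_space_PiM:
  assumes "w \<in> space (PiM {..<n} (\<lambda>_. M))" and "x \<in> space M"
  shows "w(n:=x) \<in> space (PiM {..<Suc n} (\<lambda>_. M))"
  using assms by (auto simp: space_PiM PiE_def extensional_def Pi_iff less_Suc_eq)

lemma measurable_fun_upd_last:
  "(\<lambda>(w, x). w(n := x)) \<in> measurable (PiM {..<n} (\<lambda>_. M) \<Otimes>\<^sub>M M) (PiM {..<Suc n} (\<lambda>_. M))"
  using measurable_add_dim[of n "{..<n}" "\<lambda>_. M"] by (simp add: lessThan_Suc)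

lemma integral_last_coordinate:
  fixes F :: "(nat \<Rightarrow> 'a) \<Rightarrow> real"
  assumes F[measurable]: "F \<in> borel_measurable (PiM {..<Suc n} (\<lambda>_. M))"
    and bound: "\<forall>w\<in>space (PiM {..<Suc n} (\<lambda>_. M)). \<bar>F w\<bar> \<le> B"
    and diff: "bounded_differences M (Suc n) c F"
  defines "G \<equiv> \<lambda>w. \<integral>x. F (w(n:=x)) \<partial>M"
  shows "G \<in> borel_measurable (PiM {..<n} (\<lambda>_. M))"
    and "\<forall>w\<in>space (PiM {..<n} (\<lambda>_. M)). \<bar>G w\<bar> \<le> B"
    and "bounded_differences M n c G"
proof -
  let ?P = "PiM {..<n} (\<lambda>_. M)"
  from measurable_comp[OF measurable_fun_upd_last F]
  have Fupd[measurable]: "(\<lambda>(w, x). F (w(n := x))) \<in> borel_measurable (?P \<Otimes>\<^sub>M M)"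
    by (simp add: comp_def split_beta')
  have int: "integrable M (\<lambda>x. F (w(n := x)))" if "w \<in> space ?P" for w
    by (rule integrable_const_bound[where B=B])
       (use bound fun_upd_last_in_space_PiM[OF that] measurable_Pair2[OF Fupd that] in auto)
  show "G \<in> borel_measurable ?P"
    unfolding G_def using borel_measurable_lebesgue_integral[OF Fupd] by simp
  show "\<forall>w\<in>space ?P. \<bar>G w\<bar> \<le> B"
  proof
    fix w assume w: "w \<in> space ?P"
    have "\<bar>G w\<bar> \<le> (\<integral>x. \<bar>F (w(n := x))\<bar> \<partial>M)"
      unfolding G_def by (rule integral_abs_bound)
    also have "\<dots> \<le> (\<integral>x. B \<partial>M)"
      by (rule integral_mono) (use int[OF w] bound fun_upd_last_in_space_PiM[OF w] in auto)
    finally show "\<bar>G w\<bar> \<le> B" by (simp add: prob_space)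
  qed
  show "bounded_differences M n c G"
    unfolding bounded_differences_def
  proof (intro ballI allI impI)
    fix w i x x' assume w: "w \<in> space ?P" and i: "i < n" and x: "x \<in> space M" and x': "x' \<in> space M"
    have w': "w(i:=x) \<in> space ?P" "w(i:=x') \<in> space ?P"
      using w x x' i by (auto simp: space_PiM PiE_def extensional_def Pi_iff)
    have "\<bar>G (w(i:=x)) - G (w(i:=x'))\<bar> = \<bar>\<integral>y. F ((w(n:=y))(i:=x)) - F ((w(n:=y))(i:=x')) \<partial>M\<bar>"
      unfolding G_def using i int[OF w'(1)] int[OF w'(2)]
      by (simp add: fun_upd_twist[of i n])
    also have "\<dots> \<le> (\<integral>y. \<bar>F ((w(n:=y))(i:=x)) - F ((w(n:=y))(i:=x'))\<bar> \<partial>M)"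
      by (rule integral_abs_bound)
    also have "\<dots> \<le> (\<integral>y. c \<partial>M)"
    proof (rule integral_mono)
      show "integrable M (\<lambda>y. \<bar>F ((w(n:=y))(i:=x)) - F ((w(n:=y))(i:=x'))\<bar>)"
        using int[OF w'(1)] int[OF w'(2)] i by (simp add: fun_upd_twist[of i n])
      fix y assume "y \<in> space M"
      then show "\<bar>F ((w(n:=y))(i:=x)) - F ((w(n:=y))(i:=x'))\<bar> \<le> c"
        using diff fun_upd_last_in_space_PiM[OF w] i x x' unfolding bounded_differences_def by auto
    qed simp
    finally show "\<bar>G (w(i:=x)) - G (w(i:=x'))\<bar> \<le> c" by (simp add: prob_space)
  qed
qed

lemma mgf_last_coordinate:
  fixes F :: "(nat \<Rightarrow> 'a) \<Rightarrow> real"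
  assumes F[measurable]: "F \<in> borel_measurable (PiM {..<Suc n} (\<lambda>_. M))"
    and diff: "bounded_differences M (Suc n) c F" and l: "l > 0"
    and w: "w \<in> space (PiM {..<n} (\<lambda>_. M))"
  shows "(\<integral>\<^sup>+x. ennreal (exp (l * (F (w(n:=x)) - E))) \<partial>M)
           \<le> ennreal (exp (l * ((\<integral>y. F (w(n:=y)) \<partial>M) - E))) * ennreal (exp (l\<^sup>2 * c\<^sup>2 / 2))"
proof -
  define G where "G = (\<integral>y. F (w(n:=y)) \<partial>M)"
  obtain x0 where x0: "x0 \<in> space M" using not_empty by blast
  have "(\<lambda>x. w(n := x)) \<in> measurable M (PiM {..<Suc n} (\<lambda>_. M))"
    using measurable_Pair2[OF measurable_fun_upd_last w] by simp
  then have Fx[measurable]: "(\<lambda>x. F (w(n := x))) \<in> borel_measurable M"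
    by measurable
  interpret interval_bounded_random_variable M "\<lambda>x. F (w(n := x))"
    "F (w(n:=x0)) - c" "F (w(n:=x0)) + c"
  proof
    show "AE x in M. F (w(n := x)) \<in> {F (w(n := x0)) - c..F (w(n := x0)) + c}"
    proof (rule AE_I2)
      fix x assume "x \<in> space M"
      then have "\<bar>F ((w(n:=x0))(n:=x)) - F ((w(n:=x0))(n:=x0))\<bar> \<le> c"
        using diff fun_upd_last_in_space_PiM[OF w x0] x0 unfolding bounded_differences_def by blast
      then show "F (w(n := x)) \<in> {F (w(n := x0)) - c..F (w(n := x0)) + c}" by auto
    qed
  qed simp
  have "(\<integral>\<^sup>+x. ennreal (exp (l * (F (w(n:=x)) - E))) \<partial>M)
      = (\<integral>\<^sup>+x. ennreal (exp (l * (G - E))) * ennreal (exp (l * (F (w(n:=x)) - G))) \<partial>M)"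
    by (intro nn_integral_cong) (simp add: ennreal_mult'[symmetric] exp_add[symmetric] algebra_simps)
  also have "\<dots> = ennreal (exp (l * (G - E))) * (\<integral>\<^sup>+x. ennreal (exp (l * (F (w(n:=x)) - G))) \<partial>M)"
    by (rule nn_integral_cmult) measurable
  also have "\<dots> \<le> ennreal (exp (l * (G - E))) * ennreal (exp (l\<^sup>2 * c\<^sup>2 / 2))"
    using Hoeffdings_lemma_nn_integral[OF l] unfolding G_def
    by (intro mult_left_mono) (simp_all add: power2_eq_square algebra_simps)
  finally show ?thesis unfolding G_def .
qed

lemma mcdiarmid_mgf:
  fixes F :: "(nat \<Rightarrow> 'a) \<Rightarrow> real"
  assumes "F \<in> borel_measurable (PiM {..<n} (\<lambda>_. M))"
    and "\<forall>w\<in>space (PiM {..<n} (\<lambda>_. M)). \<bar>F w\<bar> \<le> B"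
    and "bounded_differences M n c F" and l: "l > 0"
  shows "(\<integral>\<^sup>+w. ennreal (exp (l * (F w - (\<integral>v. F v \<partial>PiM {..<n} (\<lambda>_. M))))) \<partial>PiM {..<n} (\<lambda>_. M))
           \<le> ennreal (exp (real n * l\<^sup>2 * c\<^sup>2 / 2))"
  using assms(1-3)
proof (induction n arbitrary: F)
  case 0
  interpret P: prob_space "PiM ({}::nat set) (\<lambda>_. M)"
    by (rule prob_space_PiM) (simp add: prob_space_axioms)
  have sp: "space (PiM {} (\<lambda>_. M)) = {\<lambda>_. undefined}"
    by (simp add: space_PiM)
  have "(\<integral>v. F v \<partial>PiM {..<0} (\<lambda>_. M)) = (\<integral>v. F (\<lambda>_. undefined) \<partial>PiM {..<0::nat} (\<lambda>_. M))"
    by (rule Bochner_Integration.integral_cong) (auto simp: sp)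
  then have "(\<integral>\<^sup>+w. ennreal (exp (l * (F w - (\<integral>v. F v \<partial>PiM {..<0} (\<lambda>_. M))))) \<partial>PiM {..<0} (\<lambda>_. M))
      = (\<integral>\<^sup>+w. 1 \<partial>PiM {..<0::nat} (\<lambda>_. M))"
    using P.prob_space by (intro nn_integral_cong) (auto simp: sp)
  then show ?case by (simp add: P.emeasure_space_1)
next
  case (Suc n)
  interpret product_sigma_finite "\<lambda>_. M" by unfold_locales
  let ?P = "PiM {..<n} (\<lambda>_. M)" and ?Q = "PiM {..<Suc n} (\<lambda>_. M)"
  interpret Q: prob_space ?Q by (rule prob_space_PiM) (simp add: prob_space_axioms)
  note F[measurable] = Suc.prems(1)
  define G where "G w = (\<integral>x. F (w(n := x)) \<partial>M)" for w
  note G = integral_last_coordinate[OF Suc.prems, folded G_def]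
  note [measurable] = G(1)
  define E where "E = (\<integral>w. G w \<partial>?P)"
  have "integrable ?Q F"
    by (rule Q.integrable_const_bound[where B=B]) (use Suc.prems(2) in auto)
  then have EF: "(\<integral>w. F w \<partial>?Q) = E"
    unfolding G_def E_def using product_integral_insert[of "{..<n}" n F]
    by (simp add: lessThan_Suc)
  have "F \<in> borel_measurable (PiM (insert n {..<n}) (\<lambda>_. M))"
    using F by (simp add: lessThan_Suc)
  then have "(\<integral>\<^sup>+w. ennreal (exp (l * (F w - E))) \<partial>?Q)
      = (\<integral>\<^sup>+w. (\<integral>\<^sup>+x. ennreal (exp (l * (F (w(n:=x)) - E))) \<partial>M) \<partial>?P)"
    using product_nn_integral_insert[of "{..<n}" n "\<lambda>w. ennreal (exp (l * (F w - E)))"]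
    by (simp add: lessThan_Suc)
  also have "\<dots> \<le> (\<integral>\<^sup>+w. ennreal (exp (l * (G w - E))) * ennreal (exp (l\<^sup>2 * c\<^sup>2 / 2)) \<partial>?P)"
    by (rule nn_integral_mono) (erule mgf_last_coordinate[OF F Suc.prems(3) l, folded G_def])
  also have "\<dots> = (\<integral>\<^sup>+w. ennreal (exp (l * (G w - E))) \<partial>?P) * ennreal (exp (l\<^sup>2 * c\<^sup>2 / 2))"
    by (rule nn_integral_multc) measurable
  also have "\<dots> \<le> ennreal (exp (real n * l\<^sup>2 * c\<^sup>2 / 2)) * ennreal (exp (l\<^sup>2 * c\<^sup>2 / 2))"
    using Suc.IH[OF G] unfolding E_def by (intro mult_right_mono) auto
  also have "\<dots> = ennreal (exp (real (Suc n) * l\<^sup>2 * c\<^sup>2 / 2))"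
    by (simp add: ennreal_mult'[symmetric] exp_add[symmetric] algebra_simps)
  finally show ?case unfolding EF .
qed

lemma mcdiarmid_lower_tail:
  fixes F :: "(nat \<Rightarrow> 'a) \<Rightarrow> real"
  assumes F[measurable]: "F \<in> borel_measurable (PiM {..<n} (\<lambda>_. M))"
    and bound: "\<forall>w\<in>space (PiM {..<n} (\<lambda>_. M)). \<bar>F w\<bar> \<le> B"
    and diff: "bounded_differences M n c F" and "c > 0" and "t > 0" and "n > 0"
  shows "measure (PiM {..<n} (\<lambda>_. M))
           {w \<in> space (PiM {..<n} (\<lambda>_. M)). F w \<le> (\<integral>v. F v \<partial>PiM {..<n} (\<lambda>_. M)) - t}
         \<le> exp (- (t\<^sup>2 / (2 * real n * c\<^sup>2)))"
proof -
  let ?P = "PiM {..<n} (\<lambda>_. M)"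
  interpret P: prob_space ?P by (rule prob_space_PiM) (simp add: prob_space_axioms)
  define E where "E = (\<integral>v. F v \<partial>?P)"
  define l where "l = t / (real n * c\<^sup>2)"
  have l: "l > 0" using assms by (simp add: l_def)
  have diff': "bounded_differences M n c (\<lambda>w. - F w)"
    using diff unfolding bounded_differences_def by (simp add: abs_minus_commute)
  have "emeasure ?P {w \<in> space ?P. F w \<le> E - t}
      \<le> ennreal (exp (l * (E - t))) * (\<integral>\<^sup>+w. ennreal (exp (- l * F w)) * indicator (space ?P) w \<partial>?P)"
    by (rule Chernoff_ineq_nn_integral_le) (use l in auto)
  also have "\<dots> = (\<integral>\<^sup>+w. ennreal (exp (- l * t)) * ennreal (exp (l * (- F w - (\<integral>v. - F v \<partial>?P)))) \<partial>?P)"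
    by (subst nn_integral_cmult[symmetric], measurable)
       (auto intro!: nn_integral_cong
         simp: E_def ennreal_mult'[symmetric] exp_add[symmetric] algebra_simps)
  also have "\<dots> = ennreal (exp (- l * t)) * (\<integral>\<^sup>+w. ennreal (exp (l * (- F w - (\<integral>v. - F v \<partial>?P)))) \<partial>?P)"
    by (rule nn_integral_cmult) measurable
  also have "\<dots> \<le> ennreal (exp (- l * t)) * ennreal (exp (real n * l\<^sup>2 * c\<^sup>2 / 2))"
    using bound by (intro mult_left_mono mcdiarmid_mgf[OF _ _ diff' l]) auto
  also have "\<dots> = ennreal (exp (- (t\<^sup>2 / (2 * real n * c\<^sup>2))))"
    using assms
    by (simp add: ennreal_mult'[symmetric] exp_add[symmetric] l_def power2_eq_square field_simps)
  finally show ?thesis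
    unfolding E_def by (simp add: P.emeasure_eq_measure)
qed

end

definition two_marked :: "'a set \<Rightarrow> 'a set \<Rightarrow> 'a set \<Rightarrow> nat \<Rightarrow> nat \<Rightarrow> nat \<Rightarrow> 'a set" where
  "two_marked A C R i k l = (if l = i then A else if l = k then C else R)"

context prob_space
begin

lemma measure_PiE_two_marked:
  assumes sets: "A \<in> sets M" "C \<in> sets M" "R \<in> sets M" and ik: "i < n" "k < n" "i \<noteq> k"
  shows "measure (PiM {..<n} (\<lambda>_. M)) (PiE {..<n} (two_marked A C R i k))
           = measure M A * measure M C * measure M R ^ (n - 2)"
proof -
  interpret P: finite_product_prob_space "\<lambda>_. M" "{..<n}"
    by unfold_locales simp
  have "measure (PiM {..<n} (\<lambda>_. M)) (PiE {..<n} (two_marked A C R i k))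
      = (\<Prod>l<n. measure M (two_marked A C R i k l))"
    using sets by (intro P.finite_measure_PiM_emb) (simp add: two_marked_def)
  also have "\<dots> = measure M A * (measure M C * (\<Prod>l\<in>{..<n} - {i} - {k}. measure M R))"
    using ik by (simp add: prod.remove[of _ i] prod.remove[of "{..<n} - {i}" k] two_marked_def)
  also have "(\<Prod>l\<in>{..<n} - {i} - {k}. measure M R) = measure M R ^ (n - 2)"
    using ik by (simp add: card_Diff_subset numeral_2_eq_2)
  finally show ?thesis by simp
qed

lemma measure_Union_two_marked:
  assumes sets: "A \<in> sets M" "C \<in> sets M" "R \<in> sets M"
    and disjoint: "A \<inter> C = {}" "A \<inter> R = {}" "C \<inter> R = {}"
  shows "measure (PiM {..<n} (\<lambda>_. M))
           (\<Union>(i, k)\<in>{(i, k). i < n \<and> k < n \<and> i \<noteq> k}. PiE {..<n} (two_marked A C R i k))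
         = real (n * (n - 1)) * measure M A * measure M C * measure M R ^ (n - 2)"
proof -
  let ?Pairs = "{(i, k). i < n \<and> k < n \<and> i \<noteq> k}"
  let ?E = "\<lambda>(i, k). PiE {..<n} (two_marked A C R i k)"
  interpret P: prob_space "PiM {..<n} (\<lambda>_. M)"
    by (rule prob_space_PiM) (simp add: prob_space_axioms)
  have "finite ?Pairs" by (rule finite_subset[of _ "{..<n} \<times> {..<n}"]) auto
  moreover have "card ?Pairs = n * (n - 1)"
  proof -
    have "?Pairs = Sigma {..<n} (\<lambda>i. {..<n} - {i})" by auto
    then show ?thesis by (simp add: card_SigmaI)
  qed
  moreover have "?E ik \<in> sets (PiM {..<n} (\<lambda>_. M))" for ik
    using sets by (cases ik) (auto intro!: sets_PiM_I_finite simp: two_marked_def)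
  moreover have "disjoint_family_on ?E ?Pairs"
    unfolding disjoint_family_on_def
  proof (intro ballI impI)
    fix ik ik' assume ik: "ik \<in> ?Pairs" "ik' \<in> ?Pairs" "ik \<noteq> ik'"
    obtain i k i' k' where eq: "ik = (i, k)" "ik' = (i', k')" by fastforce
    show "?E ik \<inter> ?E ik' = {}"
    proof (rule equals0I)
      fix w assume "w \<in> ?E ik \<inter> ?E ik'"
      then have marked: "w l \<in> two_marked A C R i k l" "w l \<in> two_marked A C R i' k' l" if "l < n" for l
        using that by (auto simp: eq PiE_def)
      show False
        using marked[of i] marked[of k] ik disjoint by (auto simp: eq two_marked_def split: if_splits)
    qed
  qed
  ultimately have "measure (PiM {..<n} (\<lambda>_. M)) (\<Union>ik\<in>?Pairs. ?E ik)
      = (\<Sum>ik\<in>?Pairs. measure (PiM {..<n} (\<lambda>_. M)) (?E ik))"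
    by (intro measure_finite_Union) (auto simp: P.emeasure_eq_measure)
  also have "\<dots> = (\<Sum>ik\<in>?Pairs. measure M A * measure M C * measure M R ^ (n - 2))"
    using sets by (intro sum.cong) (auto simp: measure_PiE_two_marked)
  finally show ?thesis
    using \<open>card ?Pairs = n * (n - 1)\<close> by (simp add: case_prod_unfold)
qed

end

section \<open>The joint law of the data\<close>

locale classification_model =
  fixes d p :: "real \<Rightarrow> real"
  assumes d_nonneg: "\<forall>x. 0 \<le> d x"
    and d_supp: "\<forall>x. x \<notin> {0..1} \<longrightarrow> d x = 0"
    and d_cont: "continuous_on {0..1} d"
    and d_prob: "(\<integral>\<^sup>+ x. ennreal (d x) \<partial>lborel) = 1"
    and p_range: "\<forall>x. 0 \<le> p x \<and> p x \<le> 1"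
    and p_cont: "continuous_on UNIV p"
begin

lemma p_measurable[measurable]: "p \<in> borel_measurable borel"
  using p_cont by (intro borel_measurable_continuous_onI)

lemma d_measurable[measurable]: "d \<in> borel_measurable borel"
proof -
  have "(\<lambda>x. indicator {0..1} x *\<^sub>R d x) \<in> borel_measurable borel"
    by (rule borel_measurable_continuous_on_indicator[OF _ d_cont]) auto
  moreover have "(\<lambda>x. indicator {0..1} x *\<^sub>R d x) = d"
    using d_supp by (force simp: indicator_def)
  ultimately show ?thesis by simp
qed

lemma sets_joint[measurable_cong]:
  "sets (joint d p) = sets (lborel \<Otimes>\<^sub>M count_space {-1, 1::real})"
  by (simp add: joint_def)

lemma space_joint: "space (joint d p) = UNIV \<times> {-1, 1}"
  by (simp add: joint_def space_pair_measure)

lemma emeasure_joint: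
  assumes X: "X \<in> sets (lborel \<Otimes>\<^sub>M count_space {-1, 1::real})"
  shows "emeasure (joint d p) X = (\<integral>\<^sup>+x. ennreal (d x * p x) * indicator X (x, 1)
            + ennreal (d x * (1 - p x)) * indicator X (x, -1) \<partial>lborel)"
proof -
  interpret C: sigma_finite_measure "count_space {-1, 1::real}"
    by (rule sigma_finite_measure_count_space_finite) simp
  interpret pair_sigma_finite lborel "count_space {-1, 1::real}" ..
  let ?g = "\<lambda>(x, y). ennreal (d x * (if y = 1 then p x else 1 - p x))"
  have [measurable]: "?g \<in> borel_measurable (lborel \<Otimes>\<^sub>M count_space {-1, 1::real})"
    by measurable
  have "emeasure (joint d p) X = (\<integral>\<^sup>+z. ?g z * indicator X z \<partial>(lborel \<Otimes>\<^sub>M count_space {-1, 1::real}))"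
    unfolding joint_def using X by (simp add: emeasure_density)
  also have "\<dots> = (\<integral>\<^sup>+x. \<integral>\<^sup>+y. ?g (x, y) * indicator X (x, y) \<partial>count_space {-1, 1::real} \<partial>lborel)"
    using C.nn_integral_fst[of "\<lambda>z. ?g z * indicator X z"] X by simp
  also have "\<dots> = (\<integral>\<^sup>+x. ennreal (d x * p x) * indicator X (x, 1)
            + ennreal (d x * (1 - p x)) * indicator X (x, -1) \<partial>lborel)"
    by (intro nn_integral_cong, subst nn_integral_count_space_finite) (auto simp: indicator_def)
  finally show ?thesis .
qed

lemma ennreal_label_split: "ennreal (d x * p x) + ennreal (d x * (1 - p x)) = ennreal (d x)"
proof -
  have "0 \<le> d x * p x" "0 \<le> d x * (1 - p x)" using d_nonneg p_range by auto
  then show ?thesis by (simp flip: ennreal_plus add: algebra_simps)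
qed

lemma prob_space_joint: "prob_space (joint d p)"
proof
  have "emeasure (joint d p) (space (joint d p))
      = (\<integral>\<^sup>+x. ennreal (d x * p x) + ennreal (d x * (1 - p x)) \<partial>lborel)"
    by (subst emeasure_joint) (auto simp: space_joint space_pair_measure intro!: nn_integral_cong)
  also have "\<dots> = (\<integral>\<^sup>+x. ennreal (d x) \<partial>lborel)"
    by (simp add: ennreal_label_split)
  finally show "emeasure (joint d p) (space (joint d p)) = 1" using d_prob by simp
qed

definition label_prob :: "real \<Rightarrow> real \<Rightarrow> real" where
  "label_prob \<sigma> x = (if \<sigma> = 1 then p x else 1 - p x)"

lemma emeasure_joint_label:
  assumes "X \<in> sets borel" and "\<sigma> = 1 \<or> \<sigma> = -1"
  shows "emeasure (joint d p) (X \<times> {\<sigma>}) = (\<integral>\<^sup>+x. ennreal (d x * label_prob \<sigma> x) * indicator X x \<partial>lborel)"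
  using assms
  by (subst emeasure_joint) (auto intro!: nn_integral_cong simp: label_prob_def indicator_def)

lemma emeasure_joint_marginal:
  assumes "X \<in> sets borel"
  shows "emeasure (joint d p) (X \<times> {-1, 1}) = (\<integral>\<^sup>+x. ennreal (d x) * indicator X x \<partial>lborel)"
  using assms
  by (subst emeasure_joint) (auto intro!: nn_integral_cong simp: indicator_def ennreal_label_split)

definition error_prob :: "(real \<Rightarrow> real) \<Rightarrow> real \<Rightarrow> real" where
  "error_prob f x = label_prob (- sgnr (f x)) x"

lemma emeasure_joint_error:
  assumes [measurable]: "f \<in> borel_measurable borel"
  shows "emeasure (joint d p) {z \<in> space (joint d p). sgnr (f (fst z)) \<noteq> snd z}
           = (\<integral>\<^sup>+x. ennreal (d x * error_prob f x) \<partial>lborel)"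
proof -
  let ?X = "{z \<in> space (joint d p). sgnr (f (fst z)) \<noteq> snd z}"
  have "snd \<in> borel_measurable (lborel \<Otimes>\<^sub>M count_space {-1, 1::real})"
    by (rule measurable_compose[OF measurable_snd]) simp
  then have "?X \<in> sets (lborel \<Otimes>\<^sub>M count_space {-1, 1::real})"
    unfolding sgnr_def space_joint by measurable
  from emeasure_joint[OF this] show ?thesis
  proof (rule trans, intro nn_integral_cong)
    fix x
    show "ennreal (d x * p x) * indicator ?X (x, 1) + ennreal (d x * (1 - p x)) * indicator ?X (x, - 1)
        = ennreal (d x * error_prob f x)"
      by (cases "0 \<le> f x")
        (simp_all add: error_prob_def label_prob_def sgnr_def indicator_def space_joint)
  qed
qed

lemma error_prob_measurable[measurable]:
  "f \<in> borel_measurable borel \<Longrightarrow> error_prob f \<in> borel_measurable borel"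
  unfolding error_prob_def[abs_def] label_prob_def sgnr_def by measurable

lemma error_prob_bounds: "0 \<le> error_prob f x" "error_prob f x \<le> 1"
  using p_range by (auto simp: error_prob_def label_prob_def)

lemma error_prob_bayes_le: "error_prob (\<lambda>x. p x - 1/2) x \<le> error_prob f x"
  by (auto simp: error_prob_def label_prob_def sgnr_def)

lemma risk_eq_nn_integral:
  assumes "f \<in> borel_measurable borel"
  shows "risk d p f = enn2real (\<integral>\<^sup>+x. ennreal (d x * error_prob f x) \<partial>lborel)"
  unfolding risk_def measure_def emeasure_joint_error[OF assms] ..

lemma bayes_risk_plus_le_risk:
  assumes f[measurable]: "f \<in> borel_measurable borel"
    and w[measurable]: "w \<in> borel_measurable borel" and w_nonneg: "\<And>x. 0 \<le> w x"
    and le: "\<And>x. d x * error_prob (\<lambda>x. p x - 1/2) x + w x \<le> d x * error_prob f x"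
  shows "bayes_risk d p + enn2real (\<integral>\<^sup>+x. ennreal (w x) \<partial>lborel) \<le> risk d p f"
proof -
  let ?b = "\<lambda>x. p x - 1/2"
  let ?Ib = "\<integral>\<^sup>+x. ennreal (d x * error_prob ?b x) \<partial>lborel"
    and ?Iw = "\<integral>\<^sup>+x. ennreal (w x) \<partial>lborel"
    and ?If = "\<integral>\<^sup>+x. ennreal (d x * error_prob f x) \<partial>lborel"
  have nonneg: "0 \<le> d x * error_prob g x" for g x
    using d_nonneg error_prob_bounds by simp
  have "?Ib + ?Iw = (\<integral>\<^sup>+x. ennreal (d x * error_prob ?b x) + ennreal (w x) \<partial>lborel)"
    by (rule nn_integral_add[symmetric]) auto
  also have "\<dots> \<le> ?If"
    using le nonneg w_nonneg by (intro nn_integral_mono) (simp flip: ennreal_plus add: ennreal_leI)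
  finally have sum_le: "?Ib + ?Iw \<le> ?If" .
  have "?If \<le> 1"
  proof -
    interpret prob_space "joint d p" by (rule prob_space_joint)
    show ?thesis using emeasure_le_1 by (simp flip: emeasure_joint_error[OF f])
  qed
  moreover have "?Ib \<le> ?Ib + ?Iw" by (rule add_increasing2) auto
  moreover have "?Iw \<le> ?Ib + ?Iw" by (rule add_increasing) auto
  ultimately have "?Ib < \<top>" "?Iw < \<top>" "?If < \<top>"
    using sum_le by (meson ennreal_one_less_top order.trans order_le_less_trans)+
  then have "enn2real ?Ib + enn2real ?Iw \<le> enn2real ?If"
    using sum_le by (simp flip: enn2real_plus add: enn2real_mono)
  moreover have "bayes_risk d p \<le> risk d p ?b"
    unfolding bayes_risk_def by (rule cINF_lower) (auto intro!: bdd_belowI[where m=0] simp: risk_def)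
  ultimately show ?thesis
    unfolding risk_eq_nn_integral[OF f] risk_eq_nn_integral[of ?b, simplified] by linarith
qed

lemma prob_space_sample_law: "prob_space (sample_law d p n)"
  unfolding sample_law_def by (rule prob_space_PiM) (use prob_space_joint in auto)

lemma space_sample_law: "space (sample_law d p n) = PiE {..<n} (\<lambda>_. UNIV \<times> {-1, 1})"
  by (simp add: sample_law_def space_PiM space_joint)

lemma sample_measurable[measurable]:
  assumes "i \<in> {..<n}"
  shows "(\<lambda>s. fst (s i)) \<in> borel_measurable (sample_law d p n)"
    and "(\<lambda>s. snd (s i)) \<in> borel_measurable (sample_law d p n)"
proof -
  have "snd \<in> borel_measurable (lborel \<Otimes>\<^sub>M count_space {-1, 1::real})"
    by (rule measurable_compose[OF measurable_snd]) simp
  then have "fst \<in> borel_measurable (joint d p)" "snd \<in> borel_measurable (joint d p)"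
    by (simp_all add: measurable_cong_sets[OF sets_joint refl] measurable_fst'')
  then show "(\<lambda>s. fst (s i)) \<in> borel_measurable (sample_law d p n)"
    and "(\<lambda>s. snd (s i)) \<in> borel_measurable (sample_law d p n)"
    unfolding sample_law_def using measurable_component_singleton[OF assms] by measurable
qed

lemma exists_density_point:
  assumes "S \<in> sets borel" and "measure (mu_x d) S > 0"
  shows "\<exists>x\<in>S. 0 < x \<and> x < 1 \<and> 0 < d x"
proof (rule ccontr)
  assume no_point: "\<not> ?thesis"
  have "AE x in lborel. ennreal (d x) * indicator S x = 0"
  proof (rule AE_I')
    show "{0, 1::real} \<in> null_sets lborel" by (rule countable_imp_null_set_lborel) simp
    show "{x \<in> space lborel. ennreal (d x) * indicator S x \<noteq> 0} \<subseteq> {0, 1}"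
    proof
      fix x assume "x \<in> {x \<in> space lborel. ennreal (d x) * indicator S x \<noteq> 0}"
      then have "x \<in> S" "0 < d x"
        using d_nonneg[rule_format, of x] by (auto simp: indicator_def order_less_le)
      moreover from this have "x \<in> {0..1}" using d_supp by auto
      ultimately show "x \<in> {0, 1}" using no_point by auto
    qed
  qed
  then have "emeasure (mu_x d) S = 0"
    unfolding mu_x_def using assms(1) by (simp add: emeasure_density nn_integral_0_iff_AE)
  then show False using assms(2) by (simp add: measure_def)
qed

lemma exists_interval_near_point:
  fixes q :: "real \<Rightarrow> real"
  assumes q_cont: "continuous_on UNIV q"
    and x0: "0 < x0" "x0 < 1" "0 < d x0" "0 < q x0" "q x0 < 1/2"
  shows "\<exists>u L \<alpha> \<beta> D. 0 \<le> u \<and> 0 < L \<and> u + L \<le> 1 \<and> 0 < \<alpha> \<and> 0 < \<beta> \<and> \<beta> \<le> D \<and> D * L \<le> 1/2 \<and>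
     (\<forall>t\<in>{u..u+L}. \<alpha> \<le> q t \<and> q t \<le> 1/2 - \<alpha> \<and> \<beta> \<le> d t \<and> d t \<le> D)"
proof -
  have "isCont d x0"
    by (rule continuous_on_interior[OF d_cont]) (use x0 in auto)
  then obtain r1 where r1: "r1 > 0" "\<forall>y. dist y x0 < r1 \<longrightarrow> dist (d y) (d x0) < d x0 / 2"
    using x0(3) unfolding continuous_at_eps_delta by (meson half_gt_zero)
  define \<alpha> where "\<alpha> = min (q x0) (1/2 - q x0) / 2"
  have \<alpha>: "\<alpha> > 0" using x0 by (simp add: \<alpha>_def)
  have "isCont q x0"
    using q_cont by (simp add: continuous_on_eq_continuous_at)
  then obtain r2 where r2: "r2 > 0" "\<forall>y. dist y x0 < r2 \<longrightarrow> dist (q y) (q x0) < \<alpha>"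
    using \<alpha> unfolding continuous_at_eps_delta by blast
  define D where "D = 3/2 * d x0"
  define L where "L = min (min r1 r2 / 2) (min ((1 - x0) / 2) (1 / (2 * D)))"
  have D: "D > 0" using x0 by (simp add: D_def)
  have L: "L > 0" using r1 r2 x0 D by (simp add: L_def)
  have "D * L \<le> D * (1 / (2 * D))" using D by (intro mult_left_mono) (auto simp: L_def)
  then have DL: "D * L \<le> 1/2" using D by simp
  show ?thesis
  proof (intro exI conjI ballI)
    show "0 \<le> x0" "0 < L" "0 < \<alpha>" "0 < d x0 / 2" "d x0 / 2 \<le> D" "D * L \<le> 1/2"
      using x0 L \<alpha> DL by (auto simp: D_def)
    have "L \<le> (1 - x0) / 2" unfolding L_def by linarith
    then show "x0 + L \<le> 1" using x0 by simp
    fix t assume t: "t \<in> {x0..x0+L}"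
    then have "dist t x0 < r1" "dist t x0 < r2"
      using L r1 r2 by (auto simp: dist_real_def L_def)
    then have "\<bar>d t - d x0\<bar> < d x0 / 2" and "\<bar>q t - q x0\<bar> < \<alpha>"
      using r1 r2 by (auto simp: dist_real_def)
    then have "d t - d x0 < d x0 / 2" "d x0 - d t < d x0 / 2" "q t - q x0 < \<alpha>" "q x0 - q t < \<alpha>"
      unfolding abs_less_iff by linarith+
    moreover have "2 * \<alpha> \<le> q x0" "2 * \<alpha> \<le> 1/2 - q x0"
      unfolding \<alpha>_def by auto
    ultimately show "d x0 / 2 \<le> d t" "d t \<le> D" "\<alpha> \<le> q t" "q t \<le> 1/2 - \<alpha>"
      unfolding D_def by linarith+
  qed
qed

end

section \<open>Blocks and local interpolation rules\<close>

definition block :: "real \<Rightarrow> real \<Rightarrow> nat \<Rightarrow> real set" where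
  "block u h j = {u + 3 * real j * h ..< u + 3 * real j * h + 3 * h}"

definition left_third :: "real \<Rightarrow> real \<Rightarrow> nat \<Rightarrow> real set" where
  "left_third u h j = {u + 3 * real j * h .. u + 3 * real j * h + h}"

definition middle_third :: "real \<Rightarrow> real \<Rightarrow> nat \<Rightarrow> real set" where
  "middle_third u h j = {u + 3 * real j * h + h <..< u + 3 * real j * h + 2 * h}"

definition right_third :: "real \<Rightarrow> real \<Rightarrow> nat \<Rightarrow> real set" where
  "right_third u h j = {u + 3 * real j * h + 2 * h ..< u + 3 * real j * h + 3 * h}"

lemma thirds_subset_block:
  assumes "h > 0"
  shows "left_third u h j \<subseteq> block u h j" "middle_third u h j \<subseteq> block u h j"
    "right_third u h j \<subseteq> block u h j"
  using assms by (auto simp: left_third_def middle_third_def right_third_def block_def)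

lemma thirds_disjoint:
  assumes "h > 0"
  shows "left_third u h j \<inter> middle_third u h j = {}" "left_third u h j \<inter> right_third u h j = {}"
    "middle_third u h j \<inter> right_third u h j = {}"
  using assms by (auto simp: left_third_def middle_third_def right_third_def)

lemma block_eqI:
  assumes h: "h > 0" and "v \<in> block u h j" "v \<in> block u h j'"
  shows "j = j'"
proof -
  have "real j * h < (real j' + 1) * h" "real j' * h < (real j + 1) * h"
    using assms by (auto simp: block_def algebra_simps)
  then have "real j < real j' + 1" "real j' < real j + 1"
    using h by (simp_all add: mult_less_cancel_right)
  then show ?thesis by linarith
qed

lemma card_blocks_containing_le_1:
  assumes "h > 0"
  shows "card {j. j < n \<and> v \<in> block u h j} \<le> 1"
proof -
  have "card {j. j < n \<and> v \<in> block u h j} \<le> Suc 0"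
    using block_eqI[OF assms] by (subst card_le_Suc0_iff_eq) auto
  then show ?thesis by simp
qed

lemma block_subset_interval:
  assumes L: "L > 0" and j: "j < n"
  shows "block u (L / (3 * real n)) j \<subseteq> {u..u+L}"
proof -
  define h where "h = L / (3 * real n)"
  have "3 * real j * h + 3 * h = 3 * h * (real j + 1)" by (simp add: algebra_simps)
  also have "\<dots> \<le> 3 * h * real n"
    using j L by (intro mult_left_mono) (auto simp: h_def)
  also have "\<dots> = L" using j by (simp add: h_def)
  finally have "3 * real j * h + 3 * h \<le> L" .
  moreover have "0 \<le> 3 * real j * h" using L by (simp add: h_def)
  ultimately have bounds: "u \<le> u + 3 * real j * h" "u + 3 * real j * h + 3 * h \<le> u + L"
    by linarith+
  show ?thesis
    unfolding h_def[symmetric]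
  proof
    fix x assume "x \<in> block u h j"
    then have "u + 3 * real j * h \<le> x" "x < u + 3 * real j * h + 3 * h"
      by (simp_all add: block_def)
    then show "x \<in> {u..u+L}"
      using bounds unfolding atLeastAtMost_iff by (intro conjI) linarith+
  qed
qed

definition consecutive :: "(nat \<Rightarrow> real \<times> real) \<Rightarrow> nat \<Rightarrow> nat \<Rightarrow> nat \<Rightarrow> bool" where
  "consecutive s n i k \<longleftrightarrow> i < n \<and> k < n \<and> fst (s i) < fst (s k) \<and>
     \<not> (\<exists>j<n. fst (s i) < fst (s j) \<and> fst (s j) < fst (s k))"

lemma consecutiveD:
  assumes ik: "consecutive s n i k"
  shows "i < n \<and> k < n \<and> fst (s i) < fst (s k) \<and>
    fst (s k) = Min {fst (s j) | j. j < n \<and> fst (s j) > fst (s i)}"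
proof -
  have "{fst (s j) | j. j < n \<and> fst (s j) > fst (s i)} \<subseteq> (\<lambda>j. fst (s j)) ` {..<n}" by auto
  then have "finite {fst (s j) | j. j < n \<and> fst (s j) > fst (s i)}"
    using finite_surj by blast
  moreover have "fst (s k) \<le> y" if y: "y \<in> {fst (s j) | j. j < n \<and> fst (s j) > fst (s i)}" for y
  proof -
    obtain l where "l < n" "fst (s i) < fst (s l)" "y = fst (s l)" using y by blast
    then show ?thesis using ik unfolding consecutive_def by (meson not_le)
  qed
  moreover have "fst (s k) \<in> {fst (s j) | j. j < n \<and> fst (s j) > fst (s i)}"
    using ik unfolding consecutive_def by auto
  ultimately have "fst (s k) = Min {fst (s j) | j. j < n \<and> fst (s j) > fst (s i)}"
    by (intro Min_eqI[symmetric])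
  with ik show ?thesis by (simp add: consecutive_def)
qed

lemma local_interp_sign_between:
  assumes f: "f \<in> local_interp s n" and ik: "consecutive s n i k"
    and labels: "snd (s i) = \<sigma>" "snd (s k) = \<sigma>" and \<sigma>: "\<sigma> = 1 \<or> \<sigma> = -1"
    and t: "t \<in> {fst (s i)..fst (s k)}"
  shows "sgnr (f t) = \<sigma>"
proof -
  have "\<forall>i<n. \<forall>j<n. fst (s i) < fst (s j) \<and>
          \<not> (\<exists>k<n. fst (s i) < fst (s k) \<and> fst (s k) < fst (s j)) \<and> snd (s i) = snd (s j) \<longrightarrow>
          (\<exists>\<epsilon>>0. \<forall>t\<in>{fst (s i)..fst (s j)}. f t * snd (s i) \<ge> \<epsilon>)"
    using f unfolding local_interp_def by simp
  note interp = this[rule_format, of i k]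
  have "\<exists>\<epsilon>>0. \<forall>t\<in>{fst (s i)..fst (s k)}. f t * snd (s i) \<ge> \<epsilon>"
    using ik labels by (intro interp) (auto simp: consecutive_def)
  then obtain \<epsilon> where "\<epsilon> > 0" "\<forall>t\<in>{fst (s i)..fst (s k)}. f t * \<sigma> \<ge> \<epsilon>"
    using labels by auto
  then have "f t * \<sigma> > 0" using t by force
  then show ?thesis using \<sigma> by (auto simp: sgnr_def zero_less_mult_iff)
qed

definition good_block :: "real \<Rightarrow> real \<Rightarrow> real \<Rightarrow> nat \<Rightarrow> (nat \<Rightarrow> real \<times> real) \<Rightarrow> nat \<Rightarrow> bool" where
  "good_block \<sigma> u h n s j \<longleftrightarrow>
     (\<exists>i<n. fst (s i) \<in> left_third u h j \<and> snd (s i) = \<sigma>) \<and>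
     (\<forall>i<n. fst (s i) \<in> left_third u h j \<longrightarrow> snd (s i) = \<sigma>) \<and>
     (\<forall>i<n. fst (s i) \<notin> middle_third u h j) \<and>
     (\<exists>i<n. fst (s i) \<in> right_third u h j \<and> snd (s i) = \<sigma>) \<and>
     (\<forall>i<n. fst (s i) \<in> right_third u h j \<longrightarrow> snd (s i) = \<sigma>)"

text \<open>The rightmost sample of the left third and the leftmost one of the right third are
  neighbours carrying the same label.\<close>
lemma good_block_consecutive:
  assumes h: "h > 0" and good: "good_block \<sigma> u h n s j"
  obtains i k where "consecutive s n i k" "snd (s i) = \<sigma>" "snd (s k) = \<sigma>"
    "fst (s i) \<in> left_third u h j" "fst (s k) \<in> right_third u h j"
proof -
  define SL where "SL = (\<lambda>i. fst (s i)) ` {i. i < n \<and> fst (s i) \<in> left_third u h j}"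
  define SR where "SR = (\<lambda>i. fst (s i)) ` {i. i < n \<and> fst (s i) \<in> right_third u h j}"
  have SL: "finite SL" "SL \<noteq> {}" and SR: "finite SR" "SR \<noteq> {}"
    using good by (auto simp: SL_def SR_def good_block_def)
  obtain i where i: "i < n" "fst (s i) \<in> left_third u h j" "fst (s i) = Max SL"
    using Max_in[OF SL] by (auto simp: SL_def)
  obtain k where k: "k < n" "fst (s k) \<in> right_third u h j" "fst (s k) = Min SR"
    using Min_in[OF SR] by (auto simp: SR_def)
  have "consecutive s n i k"
    unfolding consecutive_def
  proof (intro conjI notI)
    show "fst (s i) < fst (s k)"
      using i(2) k(2) h by (auto simp: left_third_def right_third_def)
    assume "\<exists>l<n. fst (s i) < fst (s l) \<and> fst (s l) < fst (s k)"
    then obtain l where l: "l < n" "fst (s i) < fst (s l)" "fst (s l) < fst (s k)" by blast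
    have "fst (s l) \<notin> left_third u h j"
    proof
      assume "fst (s l) \<in> left_third u h j"
      then have "fst (s l) \<in> SL" using l(1) by (auto simp: SL_def)
      then show False using Max_ge[OF SL(1)] i(3) l(2) by fastforce
    qed
    moreover have "fst (s l) \<notin> right_third u h j"
    proof
      assume "fst (s l) \<in> right_third u h j"
      then have "fst (s l) \<in> SR" using l(1) by (auto simp: SR_def)
      then show False using Min_le[OF SR(1)] k(3) l(3) by fastforce
    qed
    moreover have "fst (s l) \<notin> middle_third u h j"
      using good l(1) by (auto simp: good_block_def)
    moreover have "fst (s l) \<in> left_third u h j \<union> middle_third u h j \<union> right_third u h j"
      using l(2,3) i(2) k(2) by (auto simp: left_third_def middle_third_def right_third_def)
    ultimately show False by blast
  qed (use i k in auto)
  moreover have "snd (s i) = \<sigma>" "snd (s k) = \<sigma>"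
    using good i k by (auto simp: good_block_def)
  ultimately show ?thesis using i k that by blast
qed

lemma good_block_sign:
  assumes "h > 0" and "\<sigma> = 1 \<or> \<sigma> = -1" and "good_block \<sigma> u h n s j"
    and "f \<in> local_interp s n" and t: "t \<in> middle_third u h j"
  shows "sgnr (f t) = \<sigma>"
proof -
  obtain i k where "consecutive s n i k" "snd (s i) = \<sigma>" "snd (s k) = \<sigma>"
    and "fst (s i) \<in> left_third u h j" "fst (s k) \<in> right_third u h j"
    using good_block_consecutive assms(1,3) by blast
  moreover have "t \<in> {fst (s i)..fst (s k)}"
    using calculation(4,5) t by (auto simp: left_third_def middle_third_def right_third_def)
  ultimately show ?thesis
    using local_interp_sign_between assms(2,4) by blast
qed

lemma good_block_cong:
  assumes h: "h > 0"
    and same: "\<And>k. k < n \<Longrightarrow> s k \<noteq> s' k \<Longrightarrow> fst (s k) \<notin> block u h j \<and> fst (s' k) \<notin> block u h j"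
  shows "good_block \<sigma> u h n s j = good_block \<sigma> u h n s' j"
proof -
  have agree: "s k = s' k" if "k < n" "fst (s k) \<in> X \<or> fst (s' k) \<in> X" "X \<subseteq> block u h j" for k X
    using same that by blast
  have ex: "(\<exists>i<n. fst (s i) \<in> X \<and> Q (s i)) = (\<exists>i<n. fst (s' i) \<in> X \<and> Q (s' i))"
    and all: "(\<forall>i<n. fst (s i) \<in> X \<longrightarrow> Q (s i)) = (\<forall>i<n. fst (s' i) \<in> X \<longrightarrow> Q (s' i))"
    if "X \<subseteq> block u h j" for X Q
    using agree[OF _ _ that] by metis+
  note thirds = thirds_subset_block[OF h]
  show ?thesis
    unfolding good_block_def
    using ex[OF thirds(1), of "\<lambda>z. snd z = \<sigma>"] all[OF thirds(1), of "\<lambda>z. snd z = \<sigma>"]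
      all[OF thirds(2), of "\<lambda>z. False"]
      ex[OF thirds(3), of "\<lambda>z. snd z = \<sigma>"] all[OF thirds(3), of "\<lambda>z. snd z = \<sigma>"]
    by simp
qed

definition good_count :: "real \<Rightarrow> real \<Rightarrow> real \<Rightarrow> nat \<Rightarrow> (nat \<Rightarrow> real \<times> real) \<Rightarrow> real" where
  "good_count \<sigma> u h n s = (\<Sum>j<n. if good_block \<sigma> u h n s j then 1 else 0)"

lemma sum_indicator_eq_card:
  "(\<Sum>j<n. if P j then 1 else 0) = real (card {j. j < (n::nat) \<and> P j})"
proof -
  have "(\<Sum>j<n. if P j then 1 else 0) = (\<Sum>j\<in>{j \<in> {..<n}. P j}. 1::real)"
    by (rule sum.inter_filter[symmetric]) simp
  also have "{j \<in> {..<n}. P j} = {j. j < n \<and> P j}" by auto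
  finally show ?thesis by simp
qed

lemma good_count_eq_card: "good_count \<sigma> u h n s = real (card {j. j < n \<and> good_block \<sigma> u h n s j})"
  unfolding good_count_def by (rule sum_indicator_eq_card)

lemma abs_good_count_le: "\<bar>good_count \<sigma> u h n s\<bar> \<le> real n"
proof -
  have "card {j. j < n \<and> good_block \<sigma> u h n s j} \<le> card {..<n}" by (rule card_mono) auto
  then show ?thesis unfolding good_count_eq_card by simp
qed

text \<open>Moving one sample changes the status of at most the two blocks containing its old and
  its new position.\<close>
lemma bounded_differences_good_count:
  assumes h: "h > 0"
  shows "bounded_differences M n 2 (good_count \<sigma> u h n)"
  unfolding bounded_differences_def
proof (intro ballI allI impI)
  fix w i x x'
  let ?g = "\<lambda>y j. good_block \<sigma> u h n (w(i:=y)) j"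
  let ?B = "\<lambda>v. {j. j < n \<and> v \<in> block u h j}"
  have "\<bar>good_count \<sigma> u h n (w(i:=x)) - good_count \<sigma> u h n (w(i:=x'))\<bar>
      \<le> (\<Sum>j<n. if ?g x j \<noteq> ?g x' j then 1 else 0)"
    unfolding good_count_def sum_subtractf[symmetric]
    by (rule order_trans[OF sum_abs], rule sum_mono) auto
  also have "\<dots> = real (card {j. j < n \<and> ?g x j \<noteq> ?g x' j})"
    by (rule sum_indicator_eq_card)
  also have "{j. j < n \<and> ?g x j \<noteq> ?g x' j} \<subseteq> ?B (fst x) \<union> ?B (fst x')"
  proof
    fix j assume j: "j \<in> {j. j < n \<and> ?g x j \<noteq> ?g x' j}"
    show "j \<in> ?B (fst x) \<union> ?B (fst x')"
    proof (rule ccontr)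
      assume "j \<notin> ?B (fst x) \<union> ?B (fst x')"
      then have "fst x \<notin> block u h j" "fst x' \<notin> block u h j" using j by auto
      then have "?g x j = ?g x' j" by (intro good_block_cong[OF h]) auto
      with j show False by simp
    qed
  qed
  then have "card {j. j < n \<and> ?g x j \<noteq> ?g x' j} \<le> card (?B (fst x) \<union> ?B (fst x'))"
    by (intro card_mono) auto
  also have "\<dots> \<le> 2"
    using card_Un_le[of "?B (fst x)" "?B (fst x')"]
      card_blocks_containing_le_1[OF h, of n "fst x" u]
      card_blocks_containing_le_1[OF h, of n "fst x'" u]
    by linarith
  finally show "\<bar>good_count \<sigma> u h n (w(i:=x)) - good_count \<sigma> u h n (w(i:=x'))\<bar> \<le> 2"
    by simp
qed

lemma emeasure_Union_middle_thirds:
  assumes h: "h > 0" and G: "finite G"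
  shows "emeasure lborel (\<Union>j\<in>G. middle_third u h j) = ennreal (real (card G) * h)"
proof -
  have "disjoint_family_on (middle_third u h) G"
    unfolding disjoint_family_on_def
    using block_eqI[OF h] thirds_subset_block(2)[OF h] by blast
  moreover have "middle_third u h ` G \<subseteq> sets lborel"
    by (auto simp: middle_third_def)
  ultimately have "emeasure lborel (\<Union>j\<in>G. middle_third u h j)
      = (\<Sum>j\<in>G. emeasure lborel (middle_third u h j))"
    using G by (intro sum_emeasure[symmetric])
  also have "\<dots> = (\<Sum>j\<in>G. ennreal h)"
    using h by (intro sum.cong) (auto simp: middle_third_def)
  finally show ?thesis
    using h by (simp add: ennreal_of_nat_eq_real_of_nat ennreal_mult)
qed

lemma PiE_two_marked_subset_good_block:
  assumes h: "h > 0" and ik: "i < n" "k < n" "i \<noteq> k"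
  shows "PiE {..<n} (two_marked (left_third u h j \<times> {\<sigma>}) (right_third u h j \<times> {\<sigma>})
           ((- block u h j) \<times> {-1, 1}) i k) \<subseteq> {s. good_block \<sigma> u h n s j}"
proof
  fix s assume s: "s \<in> PiE {..<n} (two_marked (left_third u h j \<times> {\<sigma>}) (right_third u h j \<times> {\<sigma>})
           ((- block u h j) \<times> {-1, 1}) i k)"
  then have marked: "s l \<in> two_marked (left_third u h j \<times> {\<sigma>}) (right_third u h j \<times> {\<sigma>})
           ((- block u h j) \<times> {-1, 1}) i k l" if "l < n" for l
    using that by (auto simp: PiE_def)
  have in_block: "snd (s l) = \<sigma> \<and> fst (s l) \<in> left_third u h j \<union> right_third u h j"
    if "l < n" "fst (s l) \<in> block u h j" for l
    using marked[OF that(1)] that(2) by (auto simp: two_marked_def split: if_splits)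
  note thirds = thirds_subset_block[OF h] thirds_disjoint[OF h]
  show "s \<in> {s. good_block \<sigma> u h n s j}"
    unfolding mem_Collect_eq good_block_def
  proof (intro conjI allI impI)
    show "\<exists>l<n. fst (s l) \<in> left_third u h j \<and> snd (s l) = \<sigma>"
      using marked[of i] ik by (intro exI[of _ i]) (auto simp: two_marked_def)
    show "\<exists>l<n. fst (s l) \<in> right_third u h j \<and> snd (s l) = \<sigma>"
      using marked[of k] ik by (intro exI[of _ k]) (auto simp: two_marked_def)
  next
    fix l assume "l < n"
    show "fst (s l) \<notin> middle_third u h j"
      using in_block[OF \<open>l < n\<close>] thirds by blast
    show "snd (s l) = \<sigma>" if "fst (s l) \<in> left_third u h j"
      using in_block[OF \<open>l < n\<close>] thirds that by blast
    show "snd (s l) = \<sigma>" if "fst (s l) \<in> right_third u h j"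
      using in_block[OF \<open>l < n\<close>] thirds that by blast
  qed
qed

context classification_model
begin

lemma good_block_measurable[measurable]:
  "Measurable.pred (sample_law d p n) (\<lambda>s. good_block \<sigma> u h n s j)"
  unfolding good_block_def left_third_def middle_third_def right_third_def by measurable

lemma good_count_measurable[measurable]:
  "good_count \<sigma> u h n \<in> borel_measurable (sample_law d p n)"
  unfolding good_count_def by measurable

lemma expectation_good_count:
  "(\<integral>s. good_count \<sigma> u h n s \<partial>sample_law d p n)
     = (\<Sum>j<n. measure (sample_law d p n) {s \<in> space (sample_law d p n). good_block \<sigma> u h n s j})"
proof -
  interpret prob_space "sample_law d p n" by (rule prob_space_sample_law)
  let ?G = "\<lambda>j. {s \<in> space (sample_law d p n). good_block \<sigma> u h n s j}"
  have G: "?G j \<in> sets (sample_law d p n)" for j by measurable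
  have "(\<integral>s. good_count \<sigma> u h n s \<partial>sample_law d p n)
      = (\<integral>s. (\<Sum>j<n. indicator (?G j) s) \<partial>sample_law d p n)"
    unfolding good_count_def
    by (intro Bochner_Integration.integral_cong refl sum.cong) (auto simp: indicator_def)
  also have "\<dots> = (\<Sum>j<n. \<integral>s. indicator (?G j) s \<partial>sample_law d p n)"
    using G by (intro Bochner_Integration.integral_sum integrable_real_indicator)
      (auto simp: less_top[symmetric])
  finally show ?thesis
    using G by (simp add: less_top[symmetric])
qed

lemma prob_good_block_ge_product:
  assumes h: "h > 0" and \<sigma>: "\<sigma> = 1 \<or> \<sigma> = -1"
  shows "real (n * (n - 1)) * measure (joint d p) (left_third u h j \<times> {\<sigma>})
      * measure (joint d p) (right_third u h j \<times> {\<sigma>})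
      * measure (joint d p) ((- block u h j) \<times> {-1, 1}) ^ (n - 2)
    \<le> measure (sample_law d p n) {s \<in> space (sample_law d p n). good_block \<sigma> u h n s j}"
proof -
  interpret J: prob_space "joint d p" by (rule prob_space_joint)
  interpret S: prob_space "sample_law d p n" by (rule prob_space_sample_law)
  let ?A = "left_third u h j \<times> {\<sigma>}" and ?C = "right_third u h j \<times> {\<sigma>}"
    and ?R = "(- block u h j) \<times> {-1, 1::real}"
  have sets: "?A \<in> sets (joint d p)" "?C \<in> sets (joint d p)" "?R \<in> sets (joint d p)"
    using \<sigma> by (auto simp: sets_joint left_third_def right_third_def block_def)
  have disjoint: "?A \<inter> ?C = {}" "?A \<inter> ?R = {}" "?C \<inter> ?R = {}"
    using h by (auto simp: left_third_def right_third_def block_def)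
  have "PiE {..<n} (two_marked ?A ?C ?R i k) \<subseteq> space (sample_law d p n)" for i k
    unfolding space_sample_law by (rule PiE_mono) (use \<sigma> in \<open>auto simp: two_marked_def\<close>)
  then have "(\<Union>(i, k)\<in>{(i, k). i < n \<and> k < n \<and> i \<noteq> k}. PiE {..<n} (two_marked ?A ?C ?R i k))
      \<subseteq> {s \<in> space (sample_law d p n). good_block \<sigma> u h n s j}"
    using PiE_two_marked_subset_good_block[OF h] by blast
  moreover have "{s \<in> space (sample_law d p n). good_block \<sigma> u h n s j} \<in> sets (sample_law d p n)"
    by measurable
  ultimately have "measure (sample_law d p n)
      (\<Union>(i, k)\<in>{(i, k). i < n \<and> k < n \<and> i \<noteq> k}. PiE {..<n} (two_marked ?A ?C ?R i k))
    \<le> measure (sample_law d p n) {s \<in> space (sample_law d p n). good_block \<sigma> u h n s j}"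
    by (rule S.finite_measure_mono)
  then show ?thesis
    unfolding sample_law_def J.measure_Union_two_marked[OF sets disjoint] .
qed

end

section \<open>Excess risk on an interval where the Bayes label has margin\<close>

lemma Bernoulli_half:
  assumes "n \<ge> 2"
  shows "(1 - 1 / (2 * real n)) ^ (n - 2) \<ge> 1/2"
proof -
  have "1 + real (n - 2) * (- 1 / (2 * real n)) \<le> (1 + (- 1 / (2 * real n))) ^ (n - 2)"
    by (rule Bernoulli_inequality) (use assms in \<open>simp add: field_simps\<close>)
  moreover have "1 + real (n - 2) * (- 1 / (2 * real n)) \<ge> 1/2"
    using assms by (simp add: field_simps of_nat_diff)
  ultimately show ?thesis by simp
qed

lemma sample_size_ge_2:
  fixes c \<delta> :: real
  assumes "0 < c" "c \<le> 1/8" "0 < \<delta>" "\<delta> < 1/7" "ln (1/\<delta>) / c \<le> real n"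
  shows "n \<ge> 2"
proof -
  have "exp 1 < (7::real)" using exp_le by simp
  then have "1 < ln (7::real)" using ln_less_cancel_iff[of "exp 1" 7] by simp
  also have "ln 7 < ln (1/\<delta>)" using assms by (simp add: field_simps)
  finally have "1 / c < ln (1/\<delta>) / c" using assms by (simp add: divide_strict_right_mono)
  moreover have "8 \<le> 1 / c" using assms by (simp add: field_simps)
  ultimately show ?thesis using assms by linarith
qed

text \<open>On \<open>[u, u + L]\<close> the label \<open>\<sigma>\<close> is the one the Bayes classifier does not predict, with
  margin \<open>\<alpha>\<close>. The bound \<open>D * L \<le> 1/2\<close> makes a sample fall into a fixed one of \<open>n\<close> blocks
  partitioning the interval with probability at most \<open>1 / (2 n)\<close>.\<close>
locale minority_interval = classification_model +
  fixes \<sigma> u L \<alpha> \<beta> D :: real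
  assumes sigma: "\<sigma> = 1 \<or> \<sigma> = -1"
    and u: "0 \<le> u" and L: "0 < L" and uL: "u + L \<le> 1"
    and alpha: "0 < \<alpha>" and beta: "0 < \<beta>" "\<beta> \<le> D" and DL: "D * L \<le> 1/2"
    and on_interval: "\<forall>t\<in>{u..u+L}.
      \<alpha> \<le> label_prob \<sigma> t \<and> label_prob \<sigma> t \<le> 1/2 - \<alpha> \<and> \<beta> \<le> d t \<and> d t \<le> D"

lemma (in classification_model) exists_minority_interval:
  assumes "measure (mu_x d) {x \<in> space (mu_x d). 0 < p x \<and> p x < 1/2} > 0
         \<or> measure (mu_x d) {x \<in> space (mu_x d). 1/2 < p x \<and> p x < 1} > 0"
  obtains \<sigma> u L \<alpha> \<beta> D where "minority_interval d p \<sigma> u L \<alpha> \<beta> D"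
proof -
  obtain \<sigma> where \<sigma>: "\<sigma> = 1 \<or> \<sigma> = -1"
    and pos: "measure (mu_x d) {x. 0 < label_prob \<sigma> x \<and> label_prob \<sigma> x < 1/2} > 0"
  proof (cases "measure (mu_x d) {x \<in> space (mu_x d). 0 < p x \<and> p x < 1/2} > 0")
    case True
    then show ?thesis by (intro that[of 1]) (simp_all add: label_prob_def mu_x_def)
  next
    case False
    then have "measure (mu_x d) {x. 1/2 < p x \<and> p x < 1} > 0"
      using assms by (simp add: mu_x_def)
    moreover have "{x. 1/2 < p x \<and> p x < 1} = {x. 0 < label_prob (-1) x \<and> label_prob (-1) x < 1/2}"
      by (auto simp: label_prob_def)
    ultimately show ?thesis by (intro that[of "-1"]) simp_all
  qed
  have q_cont: "continuous_on UNIV (label_prob \<sigma>)"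
    unfolding label_prob_def[abs_def] by (cases "\<sigma> = 1") (auto intro!: continuous_intros p_cont)
  have "{x. 0 < label_prob \<sigma> x \<and> label_prob \<sigma> x < 1/2} \<in> sets borel"
    unfolding label_prob_def by measurable
  from exists_density_point[OF this pos] obtain x0 where
    "0 < x0" "x0 < 1" "0 < d x0" "0 < label_prob \<sigma> x0" "label_prob \<sigma> x0 < 1/2"
    by auto
  from exists_interval_near_point[OF q_cont this] obtain u L \<alpha> \<beta> D where
    "0 \<le> u \<and> 0 < L \<and> u + L \<le> 1 \<and> 0 < \<alpha> \<and> 0 < \<beta> \<and> \<beta> \<le> D \<and> D * L \<le> 1/2 \<and>
     (\<forall>t\<in>{u..u+L}. \<alpha> \<le> label_prob \<sigma> t \<and> label_prob \<sigma> t \<le> 1/2 - \<alpha> \<and> \<beta> \<le> d t \<and> d t \<le> D)"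
    by blast
  with \<sigma> have "minority_interval_axioms d p \<sigma> u L \<alpha> \<beta> D"
    by (intro minority_interval_axioms.intro) auto
  then show ?thesis
    by (intro that minority_interval.intro classification_model_axioms)
qed

context minority_interval
begin

definition good_block_prob :: real where
  "good_block_prob = (\<alpha> * \<beta> * L)\<^sup>2 / 36"

text \<open>The four terms serve, in turn, the bounds on \<open>p\<close>, the McDiarmid exponent, the excess risk,
  and forcing \<open>n \<ge> 2\<close>.\<close>
definition excess_margin :: real where
  "excess_margin = min (min \<alpha> (good_block_prob\<^sup>2 / 32)) (min (\<alpha> * \<beta> * good_block_prob * L / 3) (1/8))"

lemma excess_margin_bounds:
  "0 < excess_margin" "excess_margin \<le> 1/8" "excess_margin \<le> \<alpha>"
  "excess_margin \<le> good_block_prob\<^sup>2 / 32" "excess_margin \<le> \<alpha> * \<beta> * good_block_prob * L / 3"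
  using alpha beta L by (simp_all add: excess_margin_def good_block_prob_def)

definition many_good_blocks :: "nat \<Rightarrow> (nat \<Rightarrow> real \<times> real) \<Rightarrow> bool" where
  "many_good_blocks n s \<longleftrightarrow>
     n \<ge> 2 \<and> real n * good_block_prob / 2 < good_count \<sigma> u (L / (3 * real n)) n s"

lemma measure_joint_label_ge:
  assumes "X \<in> sets borel" "X \<subseteq> {u..u+L}" "emeasure lborel X = ennreal m" "0 \<le> m"
  shows "\<alpha> * \<beta> * m \<le> measure (joint d p) (X \<times> {\<sigma>})"
proof -
  interpret prob_space "joint d p" by (rule prob_space_joint)
  have "ennreal (\<alpha> * \<beta> * m) = (\<integral>\<^sup>+x. ennreal (\<alpha> * \<beta>) * indicator X x \<partial>lborel)"
    using assms alpha beta by (simp add: nn_integral_cmult_indicator ennreal_mult)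
  also have "\<dots> \<le> (\<integral>\<^sup>+x. ennreal (d x * label_prob \<sigma> x) * indicator X x \<partial>lborel)"
  proof (intro nn_integral_mono)
    fix x
    have "\<alpha> * \<beta> \<le> label_prob \<sigma> x * d x" if "x \<in> X"
    proof -
      have "\<alpha> \<le> label_prob \<sigma> x" "\<beta> \<le> d x" using on_interval assms(2) that by auto
      then show ?thesis using alpha beta by (intro mult_mono) auto
    qed
    then show "ennreal (\<alpha> * \<beta>) * indicator X x \<le> ennreal (d x * label_prob \<sigma> x) * indicator X x"
      by (auto simp: indicator_def mult.commute intro: ennreal_leI)
  qed
  also have "\<dots> = emeasure (joint d p) (X \<times> {\<sigma>})"
    using emeasure_joint_label[OF assms(1) sigma] by simp
  finally show ?thesis by (simp add: emeasure_eq_measure)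
qed

lemma measure_joint_marginal_le:
  assumes "X \<in> sets borel" "X \<subseteq> {u..u+L}" "emeasure lborel X = ennreal m" "0 \<le> m"
  shows "measure (joint d p) (X \<times> {-1, 1}) \<le> D * m"
proof -
  interpret prob_space "joint d p" by (rule prob_space_joint)
  have "emeasure (joint d p) (X \<times> {-1, 1}) = (\<integral>\<^sup>+x. ennreal (d x) * indicator X x \<partial>lborel)"
    by (rule emeasure_joint_marginal[OF assms(1)])
  also have "\<dots> \<le> (\<integral>\<^sup>+x. ennreal D * indicator X x \<partial>lborel)"
    using on_interval assms(2) by (intro nn_integral_mono) (auto simp: indicator_def intro: ennreal_leI)
  also have "\<dots> = ennreal (D * m)"
    using assms beta by (simp add: nn_integral_cmult_indicator ennreal_mult)
  finally show ?thesis
    using assms beta by (simp add: emeasure_eq_measure)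
qed

lemma prob_avoid_block_ge:
  assumes n: "n \<ge> 2" and j: "j < n"
  shows "1/2 \<le> measure (joint d p) ((- block u (L / (3 * real n)) j) \<times> {-1, 1}) ^ (n - 2)"
proof -
  interpret prob_space "joint d p" by (rule prob_space_joint)
  define h where "h = L / (3 * real n)"
  have "block u h j \<subseteq> {u..u+L}"
    unfolding h_def using block_subset_interval[OF L j] .
  then have "measure (joint d p) (block u h j \<times> {-1, 1}) \<le> D * (3 * h)"
    using L n by (intro measure_joint_marginal_le) (auto simp: block_def h_def)
  moreover have "D * (3 * h) \<le> 1 / (2 * real n)"
    using DL n by (simp add: h_def field_simps)
  moreover have "(- block u h j) \<times> {-1, 1} = space (joint d p) - block u h j \<times> {-1, 1}"
    by (auto simp: space_joint)
  ultimately have "1 - 1 / (2 * real n) \<le> measure (joint d p) ((- block u h j) \<times> {-1, 1})"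
    using prob_compl[of "block u h j \<times> {-1, 1}"] by (simp add: sets_joint block_def)
  moreover have "0 \<le> 1 - 1 / (2 * real n)" using n by (simp add: field_simps)
  ultimately show ?thesis
    unfolding h_def[symmetric] using Bernoulli_half[OF n] power_mono by (meson order_trans)
qed

lemma prob_good_block_ge:
  assumes n: "n \<ge> 2" and j: "j < n"
  shows "good_block_prob \<le>
    measure (sample_law d p n) {s \<in> space (sample_law d p n). good_block \<sigma> u (L / (3 * real n)) n s j}"
proof -
  define h where "h = L / (3 * real n)"
  have h: "h > 0" using L n by (simp add: h_def)
  have "left_third u h j \<subseteq> {u..u+L}" "right_third u h j \<subseteq> {u..u+L}"
    using block_subset_interval[OF L j] thirds_subset_block[OF h] unfolding h_def by blast+
  then have A: "\<alpha> * \<beta> * h \<le> measure (joint d p) (left_third u h j \<times> {\<sigma>})"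
    and C: "\<alpha> * \<beta> * h \<le> measure (joint d p) (right_third u h j \<times> {\<sigma>})"
    using h by (auto intro!: measure_joint_label_ge simp del: atLeastAtMost_iff,
        auto simp: left_third_def right_third_def)
  have "real (n * (n - 1)) * (\<alpha> * \<beta> * h) * (\<alpha> * \<beta> * h) * (1/2)
      \<le> real (n * (n - 1)) * measure (joint d p) (left_third u h j \<times> {\<sigma>})
         * measure (joint d p) (right_third u h j \<times> {\<sigma>})
         * measure (joint d p) ((- block u h j) \<times> {-1, 1}) ^ (n - 2)"
    using A C prob_avoid_block_ge[OF n j] alpha beta h unfolding h_def[symmetric]
    by (intro mult_mono) auto
  also have "\<dots> \<le> measure (sample_law d p n) {s \<in> space (sample_law d p n). good_block \<sigma> u h n s j}"
    by (rule prob_good_block_ge_product[OF h sigma])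
  finally have "real (n * (n - 1)) * (\<alpha> * \<beta> * h) * (\<alpha> * \<beta> * h) * (1/2)
      \<le> measure (sample_law d p n) {s \<in> space (sample_law d p n). good_block \<sigma> u h n s j}" .
  moreover have "real (n * (n - 1)) * (\<alpha> * \<beta> * h) * (\<alpha> * \<beta> * h) * (1/2)
      = (real n - 1) / real n * (2 * good_block_prob)"
    using n by (simp add: h_def good_block_prob_def of_nat_diff power2_eq_square field_simps)
  moreover have "1/2 * (2 * good_block_prob) \<le> (real n - 1) / real n * (2 * good_block_prob)"
    using n by (intro mult_right_mono) (auto simp: field_simps good_block_prob_def)
  ultimately show ?thesis
    unfolding h_def by linarith
qed

lemma good_count_lower_tail:
  assumes n: "n \<ge> 2"
  shows "measure (sample_law d p n) {s \<in> space (sample_law d p n).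
           good_count \<sigma> u (L / (3 * real n)) n s \<le> real n * good_block_prob / 2}
    \<le> exp (- (real n * good_block_prob\<^sup>2 / 32))"
proof -
  define h where "h = L / (3 * real n)"
  have h: "h > 0" using L n by (simp add: h_def)
  interpret J: prob_space "joint d p" by (rule prob_space_joint)
  interpret S: prob_space "sample_law d p n" by (rule prob_space_sample_law)
  let ?\<rho> = good_block_prob and ?F = "good_count \<sigma> u h n"
  have "real n * ?\<rho> = (\<Sum>j<n. ?\<rho>)" by simp
  also have "\<dots> \<le> (\<Sum>j<n. measure (sample_law d p n) {s \<in> space (sample_law d p n). good_block \<sigma> u h n s j})"
    unfolding h_def using prob_good_block_ge[OF n] by (intro sum_mono) auto
  also have "\<dots> = (\<integral>s. ?F s \<partial>sample_law d p n)"
    by (rule expectation_good_count[symmetric])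
  finally have mean: "real n * ?\<rho> \<le> (\<integral>s. ?F s \<partial>sample_law d p n)" .
  have "measure (sample_law d p n) {s \<in> space (sample_law d p n). ?F s \<le> real n * ?\<rho> / 2}
      \<le> measure (sample_law d p n)
          {s \<in> space (sample_law d p n). ?F s \<le> (\<integral>s. ?F s \<partial>sample_law d p n) - real n * ?\<rho> / 2}"
    using mean by (intro S.finite_measure_mono) auto
  also have "\<dots> \<le> exp (- ((real n * ?\<rho> / 2)\<^sup>2 / (2 * real n * 2\<^sup>2)))"
    unfolding sample_law_def
  proof (rule J.mcdiarmid_lower_tail)
    show "?F \<in> borel_measurable (PiM {..<n} (\<lambda>_. joint d p))"
      using good_count_measurable by (simp add: sample_law_def)
    show "\<forall>w\<in>space (PiM {..<n} (\<lambda>_. joint d p)). \<bar>?F w\<bar> \<le> real n"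
      using abs_good_count_le by blast
    show "bounded_differences (joint d p) n 2 ?F"
      by (rule bounded_differences_good_count[OF h])
    show "0 < real n * ?\<rho> / 2"
      using n alpha beta L by (simp add: good_block_prob_def)
  qed (use n in auto)
  also have "(real n * ?\<rho> / 2)\<^sup>2 / (2 * real n * 2\<^sup>2) = real n * ?\<rho>\<^sup>2 / 32"
    using n by (simp add: power2_eq_square field_simps)
  finally show ?thesis unfolding h_def .
qed

text \<open>For \<open>\<delta> \<ge> 1/7\<close> the probability bound is void; otherwise \<open>ln (1/\<delta>) > 1\<close> forces \<open>n \<ge> 8\<close>.\<close>
lemma many_good_blocks_event:
  assumes \<delta>: "0 < \<delta>" and n_large: "ln (1/\<delta>) / excess_margin \<le> real n"
  shows "\<exists>E \<in> sets (sample_law d p n). 1 - 7 * \<delta> \<le> measure (sample_law d p n) E \<and>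
           (\<forall>s\<in>E. many_good_blocks n s)"
proof (cases "\<delta> < 1/7")
  case True
  then have n: "n \<ge> 2"
    using sample_size_ge_2 excess_margin_bounds assms by blast
  interpret prob_space "sample_law d p n" by (rule prob_space_sample_law)
  let ?\<rho> = good_block_prob and ?F = "good_count \<sigma> u (L / (3 * real n)) n"
  let ?bad = "{s \<in> space (sample_law d p n). ?F s \<le> real n * ?\<rho> / 2}"
  have "ln (1/\<delta>) \<le> real n * excess_margin"
    using n_large excess_margin_bounds by (simp add: field_simps)
  also have "\<dots> \<le> real n * (?\<rho>\<^sup>2 / 32)"
    using excess_margin_bounds by (intro mult_left_mono) auto
  finally have "exp (- (real n * (?\<rho>\<^sup>2 / 32))) \<le> exp (- ln (1/\<delta>))" by simp
  also have "exp (- ln (1/\<delta>)) = \<delta>" using \<delta> by (simp add: ln_div exp_minus)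
  finally have "measure (sample_law d p n) ?bad \<le> \<delta>"
    using good_count_lower_tail[OF n] by simp
  moreover have many_eq:
    "{s \<in> space (sample_law d p n). many_good_blocks n s} = space (sample_law d p n) - ?bad"
    using n by (auto simp: many_good_blocks_def)
  ultimately have
    "1 - \<delta> \<le> measure (sample_law d p n) {s \<in> space (sample_law d p n). many_good_blocks n s}"
    using prob_compl[of ?bad] by simp
  moreover have "{s \<in> space (sample_law d p n). many_good_blocks n s} \<in> sets (sample_law d p n)"
    unfolding many_eq by measurable
  ultimately show ?thesis
    using \<delta> by (intro bexI[of _ "{s \<in> space (sample_law d p n). many_good_blocks n s}"]) auto
next
  case False
  then show ?thesis by (intro bexI[of _ "{}"]) auto
qed

lemma error_excess_on_interval:
  assumes t: "t \<in> {u..u+L}" and sign: "sgnr (f t) = \<sigma>"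
  shows "d t * error_prob (\<lambda>x. p x - 1/2) t + 2 * \<alpha> * \<beta> \<le> d t * error_prob f t"
proof -
  have q: "\<alpha> \<le> label_prob \<sigma> t" "label_prob \<sigma> t \<le> 1/2 - \<alpha>" "\<beta> \<le> d t"
    using on_interval t by auto
  have "error_prob f t = 1 - label_prob \<sigma> t"
    using sigma sign by (auto simp: error_prob_def label_prob_def)
  moreover have "error_prob (\<lambda>x. p x - 1/2) t = label_prob \<sigma> t"
    using sigma q alpha by (auto simp: error_prob_def label_prob_def sgnr_def)
  moreover have "\<beta> * (2 * \<alpha>) \<le> d t * (1 - 2 * label_prob \<sigma> t)"
    using q alpha beta by (intro mult_mono) auto
  ultimately show ?thesis by (simp only:) (simp add: algebra_simps)
qed

lemma risk_ge_good_count: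
  assumes h: "h > 0" and blocks: "\<And>j. j < n \<Longrightarrow> block u h j \<subseteq> {u..u+L}"
    and f: "f \<in> local_interp s n" and f_meas[measurable]: "f \<in> borel_measurable borel"
  shows "bayes_risk d p + 2 * \<alpha> * \<beta> * h * good_count \<sigma> u h n s \<le> risk d p f"
proof -
  define G where "G = {j. j < n \<and> good_block \<sigma> u h n s j}"
  define U where "U = (\<Union>j\<in>G. middle_third u h j)"
  define w where "w x = 2 * \<alpha> * \<beta> * indicator U x" for x
  have G: "finite G" by (simp add: G_def)
  have [measurable]: "U \<in> sets borel" unfolding U_def using G by (auto simp: middle_third_def)
  have le: "d x * error_prob (\<lambda>x. p x - 1/2) x + w x \<le> d x * error_prob f x" for x
  proof (cases "x \<in> U")
    case True
    then obtain j where j: "j < n" "good_block \<sigma> u h n s j" "x \<in> middle_third u h j"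
      by (auto simp: U_def G_def)
    then have "sgnr (f x) = \<sigma>"
      using good_block_sign[OF h sigma _ f] by blast
    moreover have "x \<in> {u..u+L}"
      using blocks[OF j(1)] thirds_subset_block(2)[OF h] j(3) by blast
    ultimately show ?thesis
      using error_excess_on_interval True by (simp add: w_def)
  next
    case False
    then show ?thesis
      using error_prob_bayes_le d_nonneg by (simp add: w_def mult_left_mono)
  qed
  have "(\<integral>\<^sup>+x. ennreal (w x) \<partial>lborel) = ennreal (2 * \<alpha> * \<beta>) * emeasure lborel U"
    unfolding w_def using alpha beta
    by (subst nn_integral_cmult_indicator[symmetric])
      (auto intro!: nn_integral_cong simp: ennreal_mult indicator_def)
  also have "\<dots> = ennreal (2 * \<alpha> * \<beta> * h * good_count \<sigma> u h n s)"
    unfolding U_def emeasure_Union_middle_thirds[OF h G] good_count_eq_card G_def[symmetric]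
    using alpha beta h by (simp add: ennreal_mult' mult_ac)
  finally have "enn2real (\<integral>\<^sup>+x. ennreal (w x) \<partial>lborel) = 2 * \<alpha> * \<beta> * h * good_count \<sigma> u h n s"
    using alpha beta h by (simp add: good_count_eq_card)
  moreover have "bayes_risk d p + enn2real (\<integral>\<^sup>+x. ennreal (w x) \<partial>lborel) \<le> risk d p f"
    using le alpha beta by (intro bayes_risk_plus_le_risk) (auto simp: w_def)
  ultimately show ?thesis by simp
qed

lemma risk_excess_of_many_good_blocks:
  assumes many: "many_good_blocks n s"
    and f: "f \<in> local_interp s n" "f \<in> borel_measurable borel"
  shows "bayes_risk d p + excess_margin \<le> risk d p f"
proof -
  define h where "h = L / (3 * real n)"
  have n: "n \<ge> 2" and count: "real n * good_block_prob / 2 < good_count \<sigma> u h n s"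
    using many by (simp_all add: many_good_blocks_def h_def)
  have h: "h > 0" using L n by (simp add: h_def)
  have "excess_margin \<le> \<alpha> * \<beta> * good_block_prob * L / 3"
    by (rule excess_margin_bounds)
  also have "\<dots> = 2 * \<alpha> * \<beta> * h * (real n * good_block_prob / 2)"
    using n by (simp add: h_def field_simps)
  also have "\<dots> \<le> 2 * \<alpha> * \<beta> * h * good_count \<sigma> u h n s"
    using count alpha beta h by (intro mult_left_mono) auto
  also have "bayes_risk d p + \<dots> \<le> risk d p f"
    using block_subset_interval[OF L] by (intro risk_ge_good_count[OF h _ f]) (simp add: h_def)
  finally show ?thesis by simp
qed

lemma p_bounds_on_interval:
  assumes "c \<le> \<alpha>"
  shows "(\<forall>t\<in>{u..u+L}. c \<le> p t \<and> p t \<le> 1/2 - c) \<or> (\<forall>t\<in>{u..u+L}. 1/2 + c \<le> p t \<and> p t \<le> 1 - c)"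
    and "\<forall>t\<in>{u..u+L}. - \<sigma> = sgnr (p t - 1/2)"
  using sigma on_interval assms alpha by (auto simp: label_prob_def sgnr_def)

lemma witnesses_of_many_good_blocks:
  assumes "many_good_blocks n s"
  shows "\<exists>I S yh.
           is_interval I \<and> I \<noteq> {} \<and> I \<subseteq> {0..1} \<and> S \<subseteq> {..<n} \<times> {..<n} \<and>
           ((\<forall>t\<in>I. excess_margin \<le> p t \<and> p t \<le> 1/2 - excess_margin) \<or>
            (\<forall>t\<in>I. 1/2 + excess_margin \<le> p t \<and> p t \<le> 1 - excess_margin)) \<and>
           (\<forall>t\<in>I. yh = sgnr (p t - 1/2)) \<and>
           (\<forall>(i,k)\<in>S. fst (s i) < fst (s k) \<and>
              fst (s k) = Min {fst (s j) | j. j < n \<and> fst (s j) > fst (s i)} \<and>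
              snd (s i) = - yh \<and> snd (s k) = - yh) \<and>
           (\<forall>f\<in>local_interp s n. f \<in> borel_measurable borel \<longrightarrow>
              risk d p f \<ge> bayes_risk d p + excess_margin)"
proof (intro exI[of _ "{u..u+L}"] exI[of _ "- \<sigma>"] conjI ballI impI
    exI[of _ "{(i, k). consecutive s n i k \<and> snd (s i) = \<sigma> \<and> snd (s k) = \<sigma>}"])
  show "is_interval {u..u+L}" "{u..u+L} \<noteq> {}" "{u..u+L} \<subseteq> {0..1}"
    using L u uL by (auto simp: is_interval_cc)
  show "bayes_risk d p + excess_margin \<le> risk d p f"
    if "f \<in> local_interp s n" "f \<in> borel_measurable borel" for f
    using risk_excess_of_many_good_blocks[OF assms that] .
qed (use p_bounds_on_interval[OF excess_margin_bounds(3)] in \<open>auto dest!: consecutiveD\<close>)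

end

lemma bex_ball_mono:
  assumes "\<exists>E\<in>A. P E \<and> (\<forall>s\<in>E. Q s)" and "\<And>s. Q s \<Longrightarrow> R s"
  shows "\<exists>E\<in>A. P E \<and> (\<forall>s\<in>E. R s)"
  using assms by blast

theorem lemmaB1:
  fixes d p :: "real \<Rightarrow> real"
  assumes d_nonneg: "\<forall>x. 0 \<le> d x"
    and d_supp: "\<forall>x. x \<notin> {0..1} \<longrightarrow> d x = 0"
    and d_cont: "continuous_on {0..1} d"
    and d_prob: "(\<integral>\<^sup>+ x. ennreal (d x) \<partial>lborel) = 1"
    and p_range: "\<forall>x. 0 \<le> p x \<and> p x \<le> 1"
    and p_cont: "continuous_on UNIV p"
    and nontriv: "measure (mu_x d) {x \<in> space (mu_x d). 0 < p x \<and> p x < 1/2} > 0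
                  \<or> measure (mu_x d) {x \<in> space (mu_x d). 1/2 < p x \<and> p x < 1} > 0"
  shows "\<exists>c. 0 < c \<and> c < 1/4 \<and>
    (\<forall>\<delta> n. 0 < \<delta> \<and> \<delta> < 1 \<and> real n \<ge> ln (1/\<delta>) / c \<longrightarrow>
      (\<exists>E \<in> sets (sample_law d p n). measure (sample_law d p n) E \<ge> 1 - 7 * \<delta> \<and>
        (\<forall>s\<in>E. \<exists>I S yh.
           is_interval I \<and> I \<noteq> {} \<and> I \<subseteq> {0..1} \<and> S \<subseteq> {..<n} \<times> {..<n} \<and>
           ((\<forall>t\<in>I. c \<le> p t \<and> p t \<le> 1/2 - c) \<or> (\<forall>t\<in>I. 1/2 + c \<le> p t \<and> p t \<le> 1 - c)) \<and>
           (\<forall>t\<in>I. yh = sgnr (p t - 1/2)) \<and>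
           (\<forall>(i,k)\<in>S. fst (s i) < fst (s k) \<and>
              fst (s k) = Min {fst (s j) | j. j < n \<and> fst (s j) > fst (s i)} \<and>
              snd (s i) = - yh \<and> snd (s k) = - yh) \<and>
           (\<forall>f\<in>local_interp s n. f \<in> borel_measurable borel \<longrightarrow>
              risk d p f \<ge> bayes_risk d p + c))))"
proof -
  interpret classification_model d p
    using assms by (intro classification_model.intro)
  obtain \<sigma> u L \<alpha> \<beta> D where "minority_interval d p \<sigma> u L \<alpha> \<beta> D"
    using exists_minority_interval[OF nontriv] .
  then interpret minority_interval d p \<sigma> u L \<alpha> \<beta> D .
  show ?thesis
  proof (intro exI[of _ excess_margin] conjI allI impI)
    show "0 < excess_margin" "excess_margin < 1/4"
      using excess_margin_bounds by auto
  qed (elim conjE, rule bex_ball_mono[OF many_good_blocks_event witnesses_of_many_good_blocks])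
qed

end
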